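(* Let $x_0\in\mathbb{R}^2$, $r_0>0$, and let $E$ be a relatively closed subset of $B(x_0,r_0)$ that contains $x_0$ and separates $B(x_0,r_0)$. (1) For all $x\in E\cap B(x_0,r_0)$ and $\gamma>0$ such that $B(x,\gamma r_0)\subset B(x_0,r_0)$ and $\beta_E(x_0,r_0)\le\gamma/4$, the set $E$ separates $B(x,\gamma r_0)$. (2) Assume $\beta_E(x_0,r_0)\le1/100$. Let $x\in E\cap B(x_0,9r_0/10)$ and $r^x_0\ge r_0/10$ be such that $B(x,r^x_0)\subset B(x_0,r_0)$, and let $0<r\le r^x_0$ be such that $\beta_E(x,t)\le1/8$ for all $t\in[r,r^x_0]$. Then $E$ separates $B(x,r)$.
   Context: $B(x,r)$ is the open ball. For a set $F$ and $x\in F$, $\beta_F(x,r)=r^{-1}\inf_\ell\sup_{y\in F\cap B(x,r)}\mathrm{dist}(y,\ell)$, infimum over lines $\ell$ through $x$ (attained). With $\nu(x,r)$ a unit normal of a minimizing line and $D^\pm_t(x,r)=\{z\in B(x,r):\pm(z-x)\cdot\nu(x,r)>t\}$, $F$ separates $B(x,r)$ if $\beta:=\beta_F(x,r)\le1/2$ and $D^+_{\beta r}(x,r)$, $D^-_{\beta r}(x,r)$ lie in distinct connected components of $B(x,r)\setminus F$ (independent of the choice of minimizing line). *)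

theory Defs
  imports "HOL-Analysis.Analysis"
begin

type_synonym pt = "real ^ 2"

definition lines_through :: "pt \<Rightarrow> pt set set" where
  "lines_through x = {{x + t *\<^sub>R v | t. True} | v. v \<noteq> 0}"

definition width :: "pt set \<Rightarrow> pt \<Rightarrow> real \<Rightarrow> pt set \<Rightarrow> real" where
  "width F x r l = (SUP y \<in> F \<inter> ball x r. infdist y l)"

definition beta :: "pt set \<Rightarrow> pt \<Rightarrow> real \<Rightarrow> real" where
  "beta F x r = (INF l \<in> lines_through x. width F x r l) / r"

definition Dplus :: "pt \<Rightarrow> real \<Rightarrow> pt \<Rightarrow> real \<Rightarrow> pt set" where
  "Dplus x r \<nu> t = {z \<in> ball x r. (z - x) \<bullet> \<nu> > t}"

definition Dminus :: "pt \<Rightarrow> real \<Rightarrow> pt \<Rightarrow> real \<Rightarrow> pt set" where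
  "Dminus x r \<nu> t = {z \<in> ball x r. - ((z - x) \<bullet> \<nu>) > t}"

definition separates :: "pt set \<Rightarrow> pt \<Rightarrow> real \<Rightarrow> bool" where
  "separates F x r \<longleftrightarrow> beta F x r \<le> 1/2 \<and>
     (\<exists>l \<in> lines_through x. \<exists>\<nu>.
        width F x r l = beta F x r * r \<and>
        norm \<nu> = 1 \<and> (\<forall>z \<in> l. (z - x) \<bullet> \<nu> = 0) \<and>
        (\<exists>C1 \<in> components (ball x r - F). \<exists>C2 \<in> components (ball x r - F).
           C1 \<noteq> C2 \<and> Dplus x r \<nu> (beta F x r * r) \<subseteq> C1 \<and>
           Dminus x r \<nu> (beta F x r * r) \<subseteq> C2))"

end

theory Submission
  imports Defs
begin

text \<open>
  Suppose E separates B(y,R) and lies within w = \<beta>(y,R) R of the minimizing line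
  with unit normal \<nu> there. In a ball B(x,\<rho>) \<subseteq> B(y,R) with x \<in> E and \<rho> \<ge> 4w, E lies
  in a strip of half-width 2w \<le> \<rho>/2 with normal \<nu>, so \<beta>(x,\<rho>) \<le> 1/2. A vector u with
  |u| < \<rho> whose components along the new normal n and along \<plusminus>\<nu> both exceed \<rho>/2 gives
  points x \<plusminus> u in the two half-balls D+ and D- at x which, as x is in the old strip, also
  lie on opposite sides of that strip; the old separation keeps them in different
  components, so E separates B(x,\<rho>). Part (2) applies this repeatedly, at most
  halving the radius at each step.
\<close>

definition strip_width :: "'a::real_inner set \<Rightarrow> 'a \<Rightarrow> 'a \<Rightarrow> real" where
  "strip_width F x n = (SUP z \<in> F. \<bar>(z - x) \<bullet> n\<bar>)"

lemma inner_le_radius: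
  fixes x z n :: "'a::real_inner"
  assumes "z \<in> ball x r"
  shows "\<bar>(z - x) \<bullet> n\<bar> \<le> r * norm n"
proof -
  have "\<bar>(z - x) \<bullet> n\<bar> \<le> norm (z - x) * norm n" by (rule Cauchy_Schwarz_ineq2)
  also have "\<dots> \<le> r * norm n"
    using assms by (intro mult_right_mono) (auto simp: dist_norm norm_minus_commute)
  finally show ?thesis .
qed

lemma strip_width_upper:
  assumes "F \<subseteq> ball x r" "z \<in> F"
  shows "\<bar>(z - x) \<bullet> n\<bar> \<le> strip_width F x n"
  unfolding strip_width_def
proof (rule cSUP_upper[OF assms(2)])
  show "bdd_above ((\<lambda>z. \<bar>(z - x) \<bullet> n\<bar>) ` F)"
    using assms(1) inner_le_radius by (intro bdd_aboveI2) blast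
qed

lemma strip_width_shift_le:
  assumes "x \<in> F" "\<And>z. z \<in> F \<Longrightarrow> \<bar>(z - y) \<bullet> n\<bar> \<le> w"
  shows "strip_width F x n \<le> 2 * w"
  unfolding strip_width_def
proof (rule cSUP_least)
  fix z assume "z \<in> F"
  have "(z - x) \<bullet> n = (z - y) \<bullet> n - (x - y) \<bullet> n"
    by (simp add: inner_diff_left)
  then show "\<bar>(z - x) \<bullet> n\<bar> \<le> 2 * w"
    using assms(2)[OF \<open>z \<in> F\<close>] assms(2)[OF assms(1)] by linarith
qed (use assms(1) in blast)

lemma lipschitz_on_strip_width:
  assumes "F \<subseteq> ball x r" "F \<noteq> {}"
  shows "r-lipschitz_on S (strip_width F x)"
proof (rule lipschitz_onI)
  have le: "strip_width F x a \<le> strip_width F x b + r * norm (a - b)" for a b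
    unfolding strip_width_def[of F x a]
  proof (rule cSUP_least[OF assms(2)])
    fix z assume "z \<in> F"
    have "\<bar>(z - x) \<bullet> a\<bar> \<le> \<bar>(z - x) \<bullet> b\<bar> + \<bar>(z - x) \<bullet> (a - b)\<bar>"
      by (simp add: inner_diff_right)
    then show "\<bar>(z - x) \<bullet> a\<bar> \<le> strip_width F x b + r * norm (a - b)"
      using inner_le_radius[of z x r "a - b"] strip_width_upper[OF assms(1) \<open>z \<in> F\<close>, of b]
        \<open>z \<in> F\<close> assms(1) by (meson add_mono order_trans subsetD)
  qed
  show "dist (strip_width F x a) (strip_width F x b) \<le> r * dist a b" for a b
    using le[of a b] le[of b a] by (simp add: dist_real_def dist_norm norm_minus_commute abs_le_iff)
  show "0 \<le> r"
  proof -
    obtain z where "z \<in> F" using assms(2) by blast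
    then have "dist x z < r" using assms(1) by auto
    then show ?thesis by (meson zero_le_dist order_trans less_imp_le)
  qed
qed

lemma strip_width_attains_min:
  fixes F :: "'a::euclidean_space set"
  assumes "F \<subseteq> ball x r" "F \<noteq> {}"
  obtains n where "norm n = 1" "\<And>m. norm m = 1 \<Longrightarrow> strip_width F x n \<le> strip_width F x m"
proof -
  have "continuous_on (sphere 0 1) (strip_width F x)"
    using lipschitz_on_strip_width[OF assms] by (rule lipschitz_on_continuous_on)
  moreover have "sphere (0::'a) 1 \<noteq> {}" by simp
  ultimately obtain n where "n \<in> sphere 0 1" "\<forall>m \<in> sphere 0 1. strip_width F x n \<le> strip_width F x m"
    using continuous_attains_inf[OF compact_sphere] by blast
  then show thesis using that by simp
qed

lemma exists_short_vector_inner_gt_half: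
  fixes n \<nu> :: "'a::real_inner"
  assumes "norm n = 1" "norm \<nu> = 1" "0 < \<rho>"
  obtains u where "norm u < \<rho>" "\<rho> / 2 < u \<bullet> n" "\<rho> / 2 < \<bar>u \<bullet> \<nu>\<bar>"
proof -
  obtain \<mu> where \<mu>: "norm \<mu> = 1" "0 \<le> n \<bullet> \<mu>" "\<bar>w \<bullet> \<mu>\<bar> = \<bar>w \<bullet> \<nu>\<bar>" for w
  proof (cases "0 \<le> n \<bullet> \<nu>")
    case True
    then show ?thesis using that[of \<nu>] assms(2) by auto
  next
    case False
    then show ?thesis using that[of "- \<nu>"] assms(2) by auto
  qed
  \<comment> \<open>the bisector m of n and \<mu> has angle at most \<pi>/4 with both\<close>
  define m where "m = n + \<mu>"
  have norm_m: "(norm m)\<^sup>2 = 2 + 2 * (n \<bullet> \<mu>)"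
    and inner_m: "m \<bullet> n = 1 + n \<bullet> \<mu>" "m \<bullet> \<mu> = 1 + n \<bullet> \<mu>"
    using assms(1) \<mu>(1)
    by (simp_all add: m_def power2_norm_eq_inner inner_add_left inner_add_right inner_commute
        norm_eq_1)
  then have m_n: "(norm m)\<^sup>2 = 2 * (m \<bullet> n)" and m_\<mu>: "(norm m)\<^sup>2 = 2 * (m \<bullet> \<mu>)"
    by simp_all
  have "(10 / 9)\<^sup>2 < (norm m)\<^sup>2"
    using norm_m \<mu>(2) by (simp add: power2_eq_square)
  then have m_big: "10 / 9 < norm m"
    by (rule power2_less_imp_less) simp
  define u where "u = (9 * \<rho> / (10 * norm m)) *\<^sub>R m"
  have u_inner: "u \<bullet> v = 9 * \<rho> * norm m / 20" if "(norm m)\<^sup>2 = 2 * (m \<bullet> v)" for v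
  proof -
    have "u \<bullet> v = 9 * \<rho> / (10 * norm m) * ((norm m)\<^sup>2 / 2)"
      using that by (simp add: u_def)
    also have "\<dots> = 9 * \<rho> * norm m / 20"
      using m_big by (simp add: power2_eq_square)
    finally show ?thesis .
  qed
  have "\<rho> / 2 < 9 * \<rho> * norm m / 20"
    using m_big assms(3) by (simp add: field_simps)
  moreover have "norm u < \<rho>"
    using m_big assms(3) by (simp add: u_def)
  ultimately show thesis
    using that u_inner[OF m_n] u_inner[OF m_\<mu>] \<mu>(3)[of u] by simp
qed

lemma abs_inner_le_infdist:
  fixes n :: "'a::real_inner"
  assumes "norm n = 1" "l \<noteq> {}" "\<And>p. p \<in> l \<Longrightarrow> (p - x) \<bullet> n = 0"
  shows "\<bar>(z - x) \<bullet> n\<bar> \<le> infdist z l"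
  unfolding infdist_notempty[OF assms(2)]
proof (rule cINF_greatest[OF assms(2)])
  fix p assume "p \<in> l"
  then have "(z - x) \<bullet> n = (z - p) \<bullet> n"
    using assms(3) by (simp add: inner_diff_left)
  also have "\<bar>\<dots>\<bar> \<le> norm (z - p) * norm n" by (rule Cauchy_Schwarz_ineq2)
  finally show "\<bar>(z - x) \<bullet> n\<bar> \<le> dist z p"
    using assms(1) by (simp add: dist_norm)
qed

definition rot90 :: "pt \<Rightarrow> pt" where
  "rot90 v = vector [- (v $ 2), v $ 1]"

definition normal_line :: "pt \<Rightarrow> pt \<Rightarrow> pt set" where
  "normal_line x n = {x + t *\<^sub>R rot90 n | t. True}"

lemma inner_rot90_self [simp]: "rot90 v \<bullet> v = 0"
  by (simp add: rot90_def inner_vec_def sum_2)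

lemma norm_rot90 [simp]: "norm (rot90 v) = norm v"
  by (simp add: rot90_def norm_eq_sqrt_inner inner_vec_def sum_2 algebra_simps)

lemma orthonormal_decomposition_rot90:
  assumes "norm n = 1"
  shows "u = (u \<bullet> n) *\<^sub>R n + (u \<bullet> rot90 n) *\<^sub>R rot90 n"
proof -
  have unit: "n $ 1 * n $ 1 + n $ 2 * n $ 2 = 1"
    using assms by (simp add: norm_eq_1 inner_vec_def sum_2)
  have "((u \<bullet> n) *\<^sub>R n + (u \<bullet> rot90 n) *\<^sub>R rot90 n) $ i = u $ i * (n $ 1 * n $ 1 + n $ 2 * n $ 2)"
    if "i = 1 \<or> i = 2" for i
    using that by (auto simp: rot90_def inner_vec_def sum_2 algebra_simps)
  then show ?thesis
    unfolding unit by (simp add: vec_eq_iff forall_2)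
qed

lemma normal_line_in_lines_through:
  assumes "norm n = 1"
  shows "normal_line x n \<in> lines_through x"
proof -
  have "rot90 n \<noteq> 0"
    using assms norm_rot90[of n] by force
  then show ?thesis
    unfolding normal_line_def lines_through_def by blast
qed

lemma inner_normal_line: "z \<in> normal_line x n \<Longrightarrow> (z - x) \<bullet> n = 0"
  unfolding normal_line_def by auto

lemma infdist_normal_line:
  assumes "norm n = 1"
  shows "infdist z (normal_line x n) = \<bar>(z - x) \<bullet> n\<bar>"
proof (rule antisym)
  define p where "p = x + ((z - x) \<bullet> rot90 n) *\<^sub>R rot90 n"
  have "z - p = ((z - x) \<bullet> n) *\<^sub>R n"
    using orthonormal_decomposition_rot90[OF assms, of "z - x"] unfolding p_def
    by (simp add: algebra_simps)
  then have "dist z p = \<bar>(z - x) \<bullet> n\<bar>"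
    using assms by (simp add: dist_norm)
  moreover have "p \<in> normal_line x n"
    unfolding normal_line_def p_def by blast
  ultimately show "infdist z (normal_line x n) \<le> \<bar>(z - x) \<bullet> n\<bar>"
    by (metis infdist_le)
  show "\<bar>(z - x) \<bullet> n\<bar> \<le> infdist z (normal_line x n)"
    using assms inner_normal_line by (intro abs_inner_le_infdist) (auto simp: normal_line_def)
qed

lemma width_normal_line:
  "norm n = 1 \<Longrightarrow> width E x r (normal_line x n) = strip_width (E \<inter> ball x r) x n"
  unfolding width_def strip_width_def by (simp add: infdist_normal_line)

lemma strip_width_le_width:
  assumes "x \<in> l" "norm n = 1" "\<And>p. p \<in> l \<Longrightarrow> (p - x) \<bullet> n = 0" "E \<inter> ball x r \<noteq> {}"
  shows "strip_width (E \<inter> ball x r) x n \<le> width E x r l"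
  unfolding strip_width_def width_def
proof (rule cSUP_mono[OF assms(4)])
  show "bdd_above ((\<lambda>z. infdist z l) ` (E \<inter> ball x r))"
  proof (rule bdd_aboveI2)
    fix z assume "z \<in> E \<inter> ball x r"
    then show "infdist z l \<le> r"
      using infdist_le[OF assms(1), of z] by (simp add: dist_commute)
  qed
  show "\<exists>m \<in> E \<inter> ball x r. \<bar>(z - x) \<bullet> n\<bar> \<le> infdist m l" if "z \<in> E \<inter> ball x r" for z
    using that abs_inner_le_infdist[OF assms(2) _ assms(3)] assms(1) by blast
qed

lemma abs_inner_le_width:
  assumes "l \<in> lines_through y" "norm \<nu> = 1" "\<forall>p \<in> l. (p - y) \<bullet> \<nu> = 0" "z \<in> E \<inter> ball y R"
  shows "\<bar>(z - y) \<bullet> \<nu>\<bar> \<le> width E y R l"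
proof -
  have "y \<in> l"
    using assms(1) unfolding lines_through_def by force
  then have "strip_width (E \<inter> ball y R) y \<nu> \<le> width E y R l"
    using strip_width_le_width[of y l \<nu> E R] assms(2-4) by blast
  then show ?thesis
    using strip_width_upper[of "E \<inter> ball y R" y R z \<nu>] assms(4) by simp
qed

lemma beta_attained:
  assumes "x \<in> E" "0 < r"
  obtains n where "norm n = 1" "beta E x r * r = strip_width (E \<inter> ball x r) x n"
    "\<And>m. norm m = 1 \<Longrightarrow> beta E x r * r \<le> strip_width (E \<inter> ball x r) x m"
proof -
  let ?F = "E \<inter> ball x r"
  have F: "?F \<subseteq> ball x r" "?F \<noteq> {}"
    using assms by auto
  obtain n where n: "norm n = 1"
    and min: "\<And>m. norm m = 1 \<Longrightarrow> strip_width ?F x n \<le> strip_width ?F x m"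
    using strip_width_attains_min[OF F] by blast
  have "(INF l \<in> lines_through x. width E x r l) = strip_width ?F x n"
  proof (rule cInf_eq_minimum)
    show "strip_width ?F x n \<in> width E x r ` lines_through x"
      using normal_line_in_lines_through[OF n] width_normal_line[OF n] by (metis image_eqI)
  next
    fix w assume "w \<in> width E x r ` lines_through x"
    then obtain v where v: "v \<noteq> 0" "w = width E x r {x + t *\<^sub>R v | t. True}"
      unfolding lines_through_def by auto
    define m where "m = (1 / norm v) *\<^sub>R rot90 v"
    have m: "norm m = 1"
      using v(1) by (simp add: m_def)
    have perp: "(p - x) \<bullet> m = 0" if "p \<in> {x + t *\<^sub>R v | t. True}" for p
      using that by (auto simp: m_def inner_commute[of v])
    have "x \<in> {x + t *\<^sub>R v | t. True}"
      by (intro CollectI exI[of _ 0]) simp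
    from strip_width_le_width[OF this m perp F(2)]
    have "strip_width ?F x m \<le> w"
      using v(2) by simp
    then show "strip_width ?F x n \<le> w"
      using min[OF m] by linarith
  qed
  then have "beta E x r * r = strip_width ?F x n"
    using assms(2) by (simp add: beta_def)
  then show thesis
    using that n min by simp
qed

lemma convex_Dplus: "convex (Dplus x r n t)"
proof -
  have "Dplus x r n t = ball x r \<inter> {z. t + n \<bullet> x < n \<bullet> z}"
    by (auto simp: Dplus_def inner_diff_left inner_commute[of n])
  then show ?thesis
    by (simp add: convex_Int convex_halfspace_gt)
qed

lemma convex_Dminus: "convex (Dminus x r n t)"
proof -
  have "Dminus x r n t = ball x r \<inter> {z. t + (- n) \<bullet> x < (- n) \<bullet> z}"
    by (auto simp: Dminus_def inner_diff_left inner_commute[of n])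
  then show ?thesis
    by (metis convex_Int convex_ball convex_halfspace_gt)
qed

lemma Dplus_subset_complement:
  assumes "strip_width (E \<inter> ball x r) x n \<le> t"
  shows "Dplus x r n t \<subseteq> ball x r - E"
  using strip_width_upper[of "E \<inter> ball x r" x r _ n] assms by (force simp: Dplus_def)

lemma Dminus_subset_complement:
  assumes "strip_width (E \<inter> ball x r) x n \<le> t"
  shows "Dminus x r n t \<subseteq> ball x r - E"
  using strip_width_upper[of "E \<inter> ball x r" x r _ n] assms by (force simp: Dminus_def)

lemma separatesI:
  assumes "beta E x r \<le> 1 / 2" "norm n = 1"
    and flat: "beta E x r * r = strip_width (E \<inter> ball x r) x n"
    and p: "p \<in> Dplus x r n (beta E x r * r)" and q: "q \<in> Dminus x r n (beta E x r * r)"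
    and apart: "\<not> connected_component (ball x r - E) p q"
  shows "separates E x r"
proof -
  let ?S = "ball x r - E" and ?b = "beta E x r * r"
  have D: "Dplus x r n ?b \<subseteq> ?S" "Dminus x r n ?b \<subseteq> ?S"
    using flat by (simp_all add: Dplus_subset_complement Dminus_subset_complement)
  let ?C1 = "connected_component_set ?S p" and ?C2 = "connected_component_set ?S q"
  have "Dplus x r n ?b \<subseteq> ?C1"
    by (rule connected_component_maximal[OF p convex_connected[OF convex_Dplus] D(1)])
  moreover have "Dminus x r n ?b \<subseteq> ?C2"
    by (rule connected_component_maximal[OF q convex_connected[OF convex_Dminus] D(2)])
  moreover have "?C1 \<noteq> ?C2"
  proof -
    have "q \<in> ?C2"
      using q D(2) by auto
    then show ?thesis
      using apart by auto
  qed
  moreover have "?C1 \<in> components ?S" "?C2 \<in> components ?S"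
    using p q D by (simp_all add: componentsI subset_iff)
  ultimately have "\<exists>C1 \<in> components ?S. \<exists>C2 \<in> components ?S.
      C1 \<noteq> C2 \<and> Dplus x r n ?b \<subseteq> C1 \<and> Dminus x r n ?b \<subseteq> C2"
    by meson
  moreover have "width E x r (normal_line x n) = ?b"
    using flat width_normal_line[OF assms(2)] by simp
  moreover have "\<forall>z \<in> normal_line x n. (z - x) \<bullet> n = 0"
    using inner_normal_line by blast
  ultimately show ?thesis
    unfolding separates_def using assms(1,2)
    by (intro conjI bexI[OF _ normal_line_in_lines_through[OF assms(2)]] exI[of _ n]) auto
qed

lemma not_connected_across_strip:
  assumes C: "C1 \<in> components S" "C2 \<in> components S" "C1 \<noteq> C2"
    and D: "Dplus y R \<nu> w \<subseteq> C1" "Dminus y R \<nu> w \<subseteq> C2"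
    and x: "\<bar>(x - y) \<bullet> \<nu>\<bar> \<le> w" and u: "2 * w < \<bar>u \<bullet> \<nu>\<bar>"
    and in_ball: "x + u \<in> ball y R" "x - u \<in> ball y R" and "S' \<subseteq> S"
  shows "\<not> connected_component S' (x + u) (x - u)"
proof
  have shift: "(x + u - y) \<bullet> \<nu> = (x - y) \<bullet> \<nu> + u \<bullet> \<nu>" "(x - u - y) \<bullet> \<nu> = (x - y) \<bullet> \<nu> - u \<bullet> \<nu>"
    by (simp_all add: algebra_simps inner_diff_left inner_add_left)
  have x_strip: "- w \<le> (x - y) \<bullet> \<nu>" "(x - y) \<bullet> \<nu> \<le> w"
    using x by (simp_all add: abs_le_iff)
  have sides: "x + u \<in> C1 \<and> x - u \<in> C2 \<or> x + u \<in> C2 \<and> x - u \<in> C1"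
  proof (cases "0 \<le> u \<bullet> \<nu>")
    case True
    then have "x + u \<in> Dplus y R \<nu> w" "x - u \<in> Dminus y R \<nu> w"
      using x_strip u in_ball by (simp_all add: Dplus_def Dminus_def shift)
    then show ?thesis
      using D by blast
  next
    case False
    then have "x - u \<in> Dplus y R \<nu> w" "x + u \<in> Dminus y R \<nu> w"
      using x_strip u in_ball by (simp_all add: Dplus_def Dminus_def shift)
    then show ?thesis
      using D by blast
  qed
  assume "connected_component S' (x + u) (x - u)"
  then obtain T where T: "connected T" "T \<subseteq> S'" "x + u \<in> T" "x - u \<in> T"
    unfolding connected_component_def by blast
  then have "C1 = C2"
    using joinable_components_eq[of T S C1 C2] \<open>S' \<subseteq> S\<close> C(1,2) sides by blast
  with C(3) show False ..
qed

lemma separates_subball: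
  assumes sep: "separates E y R" and "0 < \<rho>" "x \<in> E" "ball x \<rho> \<subseteq> ball y R"
    and flat: "beta E y R * R \<le> \<rho> / 4"
  shows "separates E x \<rho>"
proof -
  define w where "w = beta E y R * R"
  from sep obtain l \<nu> C1 C2 where l: "l \<in> lines_through y" "width E y R l = w"
    and \<nu>: "norm \<nu> = 1" "\<forall>z \<in> l. (z - y) \<bullet> \<nu> = 0"
    and C: "C1 \<in> components (ball y R - E)" "C2 \<in> components (ball y R - E)" "C1 \<noteq> C2"
    and D: "Dplus y R \<nu> w \<subseteq> C1" "Dminus y R \<nu> w \<subseteq> C2"
    unfolding separates_def w_def by blast
  have strip: "\<bar>(z - y) \<bullet> \<nu>\<bar> \<le> w" if "z \<in> E \<inter> ball y R" for z
    using abs_inner_le_width[OF l(1) \<nu> that] l(2) by simp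
  have x: "x \<in> E \<inter> ball y R"
    using assms(2-4) by (meson IntI centre_in_ball subsetD)
  obtain n where n: "norm n = 1" "beta E x \<rho> * \<rho> = strip_width (E \<inter> ball x \<rho>) x n"
    and min: "\<And>m. norm m = 1 \<Longrightarrow> beta E x \<rho> * \<rho> \<le> strip_width (E \<inter> ball x \<rho>) x m"
    using beta_attained[OF assms(3,2)] by blast
  have "strip_width (E \<inter> ball x \<rho>) x \<nu> \<le> 2 * w"
    using strip assms(2-4) by (intro strip_width_shift_le[where y = y]) auto
  then have small: "beta E x \<rho> * \<rho> \<le> \<rho> / 2"
    using min[OF \<nu>(1)] flat w_def by linarith
  obtain u where u: "norm u < \<rho>" "\<rho> / 2 < u \<bullet> n" "\<rho> / 2 < \<bar>u \<bullet> \<nu>\<bar>"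
    using exists_short_vector_inner_gt_half[OF n(1) \<nu>(1) assms(2)] .
  have in_ball: "x + u \<in> ball x \<rho>" "x - u \<in> ball x \<rho>"
    using u(1) by (simp_all add: dist_norm)
  have "\<not> connected_component (ball x \<rho> - E) (x + u) (x - u)"
  proof (rule not_connected_across_strip[OF C D strip[OF x]])
    show "2 * w < \<bar>u \<bullet> \<nu>\<bar>"
      using u(3) flat w_def by linarith
    show "x + u \<in> ball y R" "x - u \<in> ball y R"
      using in_ball assms(4) by blast+
    show "ball x \<rho> - E \<subseteq> ball y R - E"
      using assms(4) by blast
  qed
  moreover have "x + u \<in> Dplus x \<rho> n (beta E x \<rho> * \<rho>)" "x - u \<in> Dminus x \<rho> n (beta E x \<rho> * \<rho>)"
    using in_ball u(2) small by (simp_all add: Dplus_def Dminus_def inner_diff_left inner_add_left)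
  moreover have "beta E x \<rho> \<le> 1 / 2"
    using small assms(2) by (simp add: field_simps)
  ultimately show ?thesis
    using n by (intro separatesI[where n = n and p = "x + u" and q = "x - u"])
qed

lemma dyadic_descent:
  fixes P :: "real \<Rightarrow> bool"
  assumes "0 < r" "r \<le> R" "P R"
    and step: "\<And>s t. r \<le> t \<Longrightarrow> t \<le> s \<Longrightarrow> s \<le> R \<Longrightarrow> s \<le> 2 * t \<Longrightarrow> P s \<Longrightarrow> P t"
  shows "P r"
proof -
  have "P t" if "r \<le> t" "t \<le> R" "R \<le> 2 ^ k * t" for k t
    using that
  proof (induction k arbitrary: t)
    case 0
    then show ?case using assms(3) by simp
  next
    case (Suc k)
    define s where "s = min (2 * t) R"
    have "R \<le> 2 ^ k * s"
      using Suc.prems assms(1) by (auto simp: s_def min_def)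
    then have "P s"
      using Suc.IH Suc.prems assms(1) by (simp add: s_def)
    then show ?case
      using step[of t s] Suc.prems assms(1) by (simp add: s_def)
  qed
  moreover obtain k :: nat where "R / r < 2 ^ k"
    using real_arch_pow[of 2 "R / r"] by auto
  then have "R \<le> 2 ^ k * r"
    using assms(1) by (simp add: field_simps)
  ultimately show ?thesis
    using assms(1,2) by simp
qed

lemma separates_down_to_scale:
  assumes "separates E x R" "x \<in> E" "0 < r" "r \<le> R"
    and flat: "\<forall>t \<in> {r..R}. beta E x t \<le> 1 / 8"
  shows "separates E x r"
proof (rule dyadic_descent[where P = "separates E x", OF assms(3,4,1)])
  fix s t
  assume st: "r \<le> t" "t \<le> s" "s \<le> R" "s \<le> 2 * t" and "separates E x s"
  have "beta E x s * s \<le> s / 8"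
    using mult_right_mono[of "beta E x s" "1 / 8" s] flat st assms(3) by simp
  then have "beta E x s * s \<le> t / 4"
    using st by linarith
  then show "separates E x t"
    using separates_subball[OF \<open>separates E x s\<close>, of t x] st assms(2,3) by (auto simp: subset_ball)
qed

theorem lemma4p15:
  fixes x0 :: pt and r0 :: real and E :: "pt set"
  assumes "r0 > 0"
    and "E \<subseteq> ball x0 r0"
    and "closedin (top_of_set (ball x0 r0)) E"
    and "x0 \<in> E"
    and "separates E x0 r0"
  shows "(\<forall>x \<gamma>. x \<in> E \<inter> ball x0 r0 \<and> \<gamma> > 0 \<and> ball x (\<gamma> * r0) \<subseteq> ball x0 r0
              \<and> beta E x0 r0 \<le> \<gamma> / 4 \<longrightarrow> separates E x (\<gamma> * r0))
       \<and> (beta E x0 r0 \<le> 1/100 \<longrightarrow>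
          (\<forall>x rx r. x \<in> E \<inter> ball x0 (9 * r0 / 10) \<and> rx \<ge> r0 / 10
              \<and> ball x rx \<subseteq> ball x0 r0 \<and> 0 < r \<and> r \<le> rx
              \<and> (\<forall>t \<in> {r..rx}. beta E x t \<le> 1/8)
              \<longrightarrow> separates E x r))"
proof (intro conjI allI impI)
  fix x \<gamma>
  assume h: "x \<in> E \<inter> ball x0 r0 \<and> \<gamma> > 0 \<and> ball x (\<gamma> * r0) \<subseteq> ball x0 r0
    \<and> beta E x0 r0 \<le> \<gamma> / 4"
  then have "beta E x0 r0 * r0 \<le> \<gamma> * r0 / 4"
    using assms(1) by (simp add: mult_right_mono)
  then show "separates E x (\<gamma> * r0)"
    using separates_subball[OF assms(5)] h assms(1) by simp
next
  fix x rx r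
  assume flat: "beta E x0 r0 \<le> 1 / 100"
    and h: "x \<in> E \<inter> ball x0 (9 * r0 / 10) \<and> rx \<ge> r0 / 10 \<and> ball x rx \<subseteq> ball x0 r0
      \<and> 0 < r \<and> r \<le> rx \<and> (\<forall>t \<in> {r..rx}. beta E x t \<le> 1 / 8)"
  have "beta E x0 r0 * r0 \<le> r0 / 100"
    using mult_right_mono[OF flat, of r0] assms(1) by simp
  then have "beta E x0 r0 * r0 \<le> rx / 4"
    using h by linarith
  then have "separates E x rx"
    using separates_subball[OF assms(5)] h by auto
  then show "separates E x r"
    using separates_down_to_scale h by blast
qed

end
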